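(* Let $p$ be a prime and $N(x)=1+x+\dots+x^{p-1}$. Let $\mathfrak{K}$ be the $\mathbb{Z}/2$-graded ring generated by $u_0,u_1,u_2$ and $\alpha_{jk}$ for $j,k\in\{0,1,2\}$, $j\neq k$, subject to the relations $u_ju_k=\delta_{j,k}u_j$; $u_0+u_1+u_2=1$; $u_j\alpha_{jk}u_k=\alpha_{jk}$; $\alpha_{jk}\alpha_{km}=0$ whenever $\{j,k,m\}=\{0,1,2\}$; $\alpha_{01}\alpha_{10}=N(u_0-\alpha_{02}\alpha_{20})$; $\alpha_{10}\alpha_{01}=N(u_1-\alpha_{12}\alpha_{21})$; $p\,u_2=N(u_2-\alpha_{20}\alpha_{02})+N(u_2-\alpha_{21}\alpha_{12})$; where $\alpha_{12},\alpha_{21}$ are odd and all other generators even (polynomials $N(x)$ in an element $x$ of the corner $u_j\mathfrak{K}u_j$ are formed with $u_j$ as unit). Then there is a unique ring anti-automorphism $x\mapsto x^*$ of $\mathfrak{K}$ with $u_j^*=u_j$ and $\alpha_{jk}^*=\alpha_{kj}$ for all $j,k\in\{0,1,2\}$ with $j\neq k$. It is grading-preserving and involutive.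
   Context: The ring $\mathfrak{K}$ so presented is (by a result of the paper) isomorphic to Köhler's ring $\mathrm{KK}^G_*(B,B)^{\mathrm{op}}$ for $G=\mathbb{Z}/p$ and $B=\mathbb{C}\oplus\mathrm{C}(G)\oplus D$, $D$ the mapping cone of the unit map $\mathbb{C}\to\mathrm{C}(G)$; the statement concerns the ring with the presentation given. *)

theory Defs
  imports "HOL-Library.Poly_Mapping" "HOL-Algebra.QuotRing" "HOL-Computational_Algebra.Primes"
begin

datatype 'a fword = FW "'a list"

instantiation fword :: (type) monoid_add
begin
definition zero_fword :: "'a fword" where "zero_fword = FW []"
fun plus_fword :: "'a fword \<Rightarrow> 'a fword \<Rightarrow> 'a fword" where
  "plus_fword (FW a) (FW b) = FW (a @ b)"
instance
proof
  fix a b c :: "'a fword"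
  show "a + b + c = a + (b + c)" by (cases a; cases b; cases c) simp
  show "0 + a = a" by (cases a) (simp add: zero_fword_def)
  show "a + 0 = a" by (cases a) (simp add: zero_fword_def)
qed
end

datatype gen = U0 | U1 | U2 | A01 | A02 | A10 | A12 | A20 | A21

fun ug :: "nat \<Rightarrow> gen" where
  "ug 0 = U0" | "ug (Suc 0) = U1" | "ug _ = U2"

(* only used for j, k < 3 with j \<noteq> k *)
fun ag :: "nat \<Rightarrow> nat \<Rightarrow> gen" where
  "ag 0 (Suc 0) = A01" | "ag 0 (Suc (Suc 0)) = A02" | "ag (Suc 0) 0 = A10"
| "ag (Suc 0) (Suc (Suc 0)) = A12" | "ag (Suc (Suc 0)) 0 = A20"
| "ag (Suc (Suc 0)) (Suc 0) = A21" | "ag _ _ = U0"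

definition odd_gen :: "gen \<Rightarrow> bool" where
  "odd_gen g \<longleftrightarrow> g = A12 \<or> g = A21"

fun wpar :: "gen fword \<Rightarrow> nat" where
  "wpar (FW ws) = length (filter odd_gen ws) mod 2"

type_synonym fr = "gen fword \<Rightarrow>\<^sub>0 int"

definition X :: "gen \<Rightarrow> fr" where
  "X g = Poly_Mapping.single (FW [g]) 1"

definition Fr :: "fr ring" where
  "Fr = \<lparr>carrier = UNIV, monoid.mult = (*), one = 1, zero = 0, add = (+)\<rparr>"

text \<open>N(x) = 1 + x + ... + x^(p-1), formed with unit e (the corner unit u_j).\<close>
definition Npoly :: "nat \<Rightarrow> fr \<Rightarrow> fr \<Rightarrow> fr" where
  "Npoly p e x = e + (\<Sum>i\<in>{1..<p}. x ^ i)"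

abbreviation u :: "nat \<Rightarrow> fr" where "u j \<equiv> X (ug j)"
abbreviation \<alpha> :: "nat \<Rightarrow> nat \<Rightarrow> fr" where "\<alpha> j k \<equiv> X (ag j k)"

definition Rel :: "nat \<Rightarrow> fr set" where
  "Rel p =
     {u j * u k - (if j = k then u j else 0) | j k. j < 3 \<and> k < 3}
   \<union> {u 0 + u 1 + u 2 - 1}
   \<union> {u j * \<alpha> j k * u k - \<alpha> j k | j k. j < 3 \<and> k < 3 \<and> j \<noteq> k}
   \<union> {\<alpha> j k * \<alpha> k m | j k m. {j, k, m} = {0, 1, 2::nat}}
   \<union> {\<alpha> 0 1 * \<alpha> 1 0 - Npoly p (u 0) (u 0 - \<alpha> 0 2 * \<alpha> 2 0),
      \<alpha> 1 0 * \<alpha> 0 1 - Npoly p (u 1) (u 1 - \<alpha> 1 2 * \<alpha> 2 1),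
      of_nat p * u 2 - (Npoly p (u 2) (u 2 - \<alpha> 2 0 * \<alpha> 0 2)
                        + Npoly p (u 2) (u 2 - \<alpha> 2 1 * \<alpha> 1 2))}"

definition KI :: "nat \<Rightarrow> fr set" where
  "KI p = genideal Fr (Rel p)"

definition K :: "nat \<Rightarrow> fr set ring" where
  "K p = Fr Quot KI p"

definition cls :: "nat \<Rightarrow> fr \<Rightarrow> fr set" where
  "cls p f = KI p +>\<^bsub>Fr\<^esub> f"

definition Kdeg :: "nat \<Rightarrow> nat \<Rightarrow> fr set set" where
  "Kdeg p d = {cls p f | f. \<forall>w \<in> Poly_Mapping.keys f. wpar w = d}"

definition ring_antiaut :: "('a, 'b) ring_scheme \<Rightarrow> ('a \<Rightarrow> 'a) \<Rightarrow> bool" where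
  "ring_antiaut R f \<longleftrightarrow>
     bij_betw f (carrier R) (carrier R)
   \<and> (\<forall>x \<in> carrier R. \<forall>y \<in> carrier R.
        f (x \<oplus>\<^bsub>R\<^esub> y) = f x \<oplus>\<^bsub>R\<^esub> f y \<and> f (x \<otimes>\<^bsub>R\<^esub> y) = f y \<otimes>\<^bsub>R\<^esub> f x)
   \<and> f \<one>\<^bsub>R\<^esub> = \<one>\<^bsub>R\<^esub>"

definition star_on_gens :: "nat \<Rightarrow> (fr set \<Rightarrow> fr set) \<Rightarrow> bool" where
  "star_on_gens p f \<longleftrightarrow>
     (\<forall>j < 3. f (cls p (u j)) = cls p (u j))
   \<and> (\<forall>j < 3. \<forall>k < 3. j \<noteq> k \<longrightarrow> f (cls p (\<alpha> j k)) = cls p (\<alpha> k j))"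

end

theory Submission
  imports Defs
begin

(* The involution of the generators that fixes each u_j and swaps alpha_jk with alpha_kj
   extends, by reversing words, to an anti-involution of the free ring Z<gen>.  It maps every
   defining relation to a defining relation (the three N-relations are even fixed), so the
   relation ideal is stable and the anti-involution descends to K.  It is unique because K is
   generated as a ring by the generators, and it preserves the grading because it maps odd
   generators to odd generators. *)

section \<open>Linear extension of maps to free abelian groups\<close>

definition frag_map :: "('a \<Rightarrow> 'b) \<Rightarrow> ('a \<Rightarrow>\<^sub>0 int) \<Rightarrow> ('b \<Rightarrow>\<^sub>0 int)" where
  "frag_map h c = frag_extend (frag_of \<circ> h) c"

lemma frag_map_of [simp]: "frag_map h (frag_of w) = frag_of (h w)"
  by (simp add: frag_map_def)

lemma frag_map_0 [simp]: "frag_map h 0 = 0"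
  by (simp add: frag_map_def)

lemma frag_map_add: "frag_map h (a + b) = frag_map h a + frag_map h b"
  by (simp add: frag_map_def frag_extend_add)

lemma frag_map_diff: "frag_map h (a - b) = frag_map h a - frag_map h b"
  by (simp add: frag_map_def frag_extend_diff)

lemma frag_map_sum: "frag_map h (\<Sum>i\<in>A. f i) = (\<Sum>i\<in>A. frag_map h (f i))"
  by (induction A rule: infinite_finite_induct) (simp_all add: frag_map_add)

lemma frag_induct [case_names zero of diff]:
  "P 0 \<Longrightarrow> (\<And>w. P (frag_of w)) \<Longrightarrow> (\<And>a b. P a \<Longrightarrow> P b \<Longrightarrow> P (a - b)) \<Longrightarrow> P c"
  by (rule frag_induction[OF subset_UNIV]) auto

lemma frag_map_compose: "frag_map h (frag_map k c) = frag_map (h \<circ> k) c"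
  by (induction c rule: frag_induct) (simp_all add: frag_map_diff)

lemma frag_map_id [simp]: "frag_map id c = c"
  by (induction c rule: frag_induct) (simp_all add: frag_map_diff)

lemma keys_frag_map: "Poly_Mapping.keys (frag_map h c) \<subseteq> h ` Poly_Mapping.keys c"
  using keys_frag_extend[of "frag_of \<circ> h" c] by (auto simp: frag_map_def)

lemma frag_map_one:
  fixes h :: "'a::monoid_add \<Rightarrow> 'b::monoid_add"
  assumes "h 0 = 0" shows "frag_map h 1 = 1"
  using frag_map_of[of h 0] by (simp add: assms)

lemma frag_map_mult_rev:
  fixes h :: "'a::monoid_add \<Rightarrow> 'b::monoid_add"
  assumes "\<And>v w. h (v + w) = h w + h v"
  shows "frag_map h (a * b) = frag_map h b * frag_map h a"
proof (induction a rule: frag_induct)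
  case (of v)
  show ?case
    by (induction b rule: frag_induct)
       (simp_all add: mult_single assms frag_map_diff right_diff_distrib left_diff_distrib)
qed (simp_all add: frag_map_diff right_diff_distrib left_diff_distrib)

definition ring_antihom :: "('a, 'm) ring_scheme \<Rightarrow> ('b, 'n) ring_scheme \<Rightarrow> ('a \<Rightarrow> 'b) set" where
  "ring_antihom R S =
    {h. h \<in> carrier R \<rightarrow> carrier S \<and>
      (\<forall>x y. x \<in> carrier R \<and> y \<in> carrier R \<longrightarrow>
        h (x \<otimes>\<^bsub>R\<^esub> y) = h y \<otimes>\<^bsub>S\<^esub> h x \<and> h (x \<oplus>\<^bsub>R\<^esub> y) = h x \<oplus>\<^bsub>S\<^esub> h y) \<and>
      h \<one>\<^bsub>R\<^esub> = \<one>\<^bsub>S\<^esub>}"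

lemma ring_antihom_closed: "h \<in> ring_antihom R S \<Longrightarrow> x \<in> carrier R \<Longrightarrow> h x \<in> carrier S"
  by (auto simp: ring_antihom_def)

lemma ring_antihom_add:
  "h \<in> ring_antihom R S \<Longrightarrow> x \<in> carrier R \<Longrightarrow> y \<in> carrier R \<Longrightarrow>
    h (x \<oplus>\<^bsub>R\<^esub> y) = h x \<oplus>\<^bsub>S\<^esub> h y"
  by (simp add: ring_antihom_def)

lemma ring_antihom_mult:
  "h \<in> ring_antihom R S \<Longrightarrow> x \<in> carrier R \<Longrightarrow> y \<in> carrier R \<Longrightarrow>
    h (x \<otimes>\<^bsub>R\<^esub> y) = h y \<otimes>\<^bsub>S\<^esub> h x"
  by (simp add: ring_antihom_def)

lemma ring_antihom_one: "h \<in> ring_antihom R S \<Longrightarrow> h \<one>\<^bsub>R\<^esub> = \<one>\<^bsub>S\<^esub>"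
  by (simp add: ring_antihom_def)

lemma ring_antihom_zero:
  assumes "ring R" "ring S" "h \<in> ring_antihom R S"
  shows "h \<zero>\<^bsub>R\<^esub> = \<zero>\<^bsub>S\<^esub>"
proof -
  interpret R: ring R by fact
  interpret S: ring S by fact
  have "h \<zero>\<^bsub>R\<^esub> \<oplus>\<^bsub>S\<^esub> h \<zero>\<^bsub>R\<^esub> = h \<zero>\<^bsub>R\<^esub>"
    using ring_antihom_add[OF assms(3), of "\<zero>\<^bsub>R\<^esub>" "\<zero>\<^bsub>R\<^esub>"] by simp
  then show ?thesis
    using ring_antihom_closed[OF assms(3) R.zero_closed] by simp
qed

lemma ring_antihom_a_inv:
  assumes "ring R" "ring S" "h \<in> ring_antihom R S" "x \<in> carrier R"
  shows "h (\<ominus>\<^bsub>R\<^esub> x) = \<ominus>\<^bsub>S\<^esub> h x"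
proof -
  interpret R: ring R by fact
  interpret S: ring S by fact
  have "h (\<ominus>\<^bsub>R\<^esub> x) \<oplus>\<^bsub>S\<^esub> h x = \<zero>\<^bsub>S\<^esub>"
    using ring_antihom_add[OF assms(3), of "\<ominus>\<^bsub>R\<^esub> x" x] assms(4)
      ring_antihom_zero[OF assms(1-3)] by (simp add: R.l_neg)
  then show ?thesis
    using S.minus_equality assms(4) ring_antihom_closed[OF assms(3)] by simp
qed

lemma ring_antihom_comp_ring_hom:
  "h \<in> ring_antihom S T \<Longrightarrow> g \<in> ring_hom R S \<Longrightarrow> h \<circ> g \<in> ring_antihom R T"
  by (auto simp: ring_antihom_def ring_hom_def Pi_iff)

lemma ring_hom_comp_ring_antihom:
  "h \<in> ring_hom S T \<Longrightarrow> g \<in> ring_antihom R S \<Longrightarrow> h \<circ> g \<in> ring_antihom R T"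
  by (auto simp: ring_antihom_def ring_hom_def Pi_iff)

lemma ring_antiaut_imp_ring_antihom: "ring_antiaut R f \<Longrightarrow> f \<in> ring_antihom R R"
  by (auto simp: ring_antiaut_def ring_antihom_def bij_betw_def)

lemma (in ring) ring_antihom_genideal_closed:
  assumes h: "h \<in> ring_antihom R R" and S: "S \<subseteq> carrier R" "h ` S \<subseteq> Idl S"
  shows "h ` (Idl S) \<subseteq> Idl S"
proof -
  interpret I: ideal "Idl S" R
    using S(1) by (rule genideal_ideal)
  let ?J = "{x \<in> carrier R. h x \<in> Idl S}"
  have "ideal ?J R"
  proof (rule idealI[OF ring_axioms])
    show "subgroup ?J (add_monoid R)"
      by (rule add.subgroupI)
         (auto intro!: exI[of _ \<zero>]
            simp: ring_antihom_zero[OF ring_axioms ring_axioms h] ring_antihom_closed[OF h]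
              ring_antihom_add[OF h] ring_antihom_a_inv[OF ring_axioms ring_axioms h, folded a_inv_def])
    show "x \<otimes> a \<in> ?J" "a \<otimes> x \<in> ?J" if "a \<in> ?J" "x \<in> carrier R" for a x
      using that
      by (auto simp: ring_antihom_mult[OF h] ring_antihom_closed[OF h] I.I_l_closed I.I_r_closed)
  qed
  moreover have "S \<subseteq> ?J"
    using S by auto
  ultimately have "Idl S \<subseteq> ?J"
    by (rule genideal_minimal)
  then show ?thesis
    by blast
qed

lemma ring_Fr: "ring Fr"
proof (rule ringI)
  show "abelian_group Fr"
    by (rule abelian_groupI) (auto simp: Fr_def algebra_simps intro: exI[of _ "- x" for x])
  show "Group.monoid Fr"
    by (rule monoidI) (auto simp: Fr_def algebra_simps)
qed (auto simp: Fr_def algebra_simps)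

lemma Fr_simps [simp]:
  "carrier Fr = UNIV" "add Fr = (+)" "monoid.mult Fr = (*)" "one Fr = 1" "zero Fr = 0"
  by (simp_all add: Fr_def)

lemma Fr_a_inv [simp]: "\<ominus>\<^bsub>Fr\<^esub> a = - a"
  using abelian_group.minus_equality[OF ring.is_abelian_group[OF ring_Fr], of "- a" a] by simp

lemma frag_of_Cons: "frag_of (FW (g # ws)) = X g * frag_of (FW ws)"
  by (simp add: X_def mult_single)

lemma fr_induct_letters [case_names one letter mult diff]:
  assumes "P 1" "\<And>g. P (X g)" "\<And>a b. P a \<Longrightarrow> P b \<Longrightarrow> P (a * b)"
    and "\<And>a b. P a \<Longrightarrow> P b \<Longrightarrow> P (a - b)"
  shows "P c"
proof (induction c rule: frag_induct)
  case zero
  show ?case using assms(4)[OF assms(1) assms(1)] by simp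
next
  case (of w)
  show ?case
  proof (cases w)
    case (FW ws)
    have "P (frag_of (FW ws))"
    proof (induction ws)
      case Nil
      show ?case using assms(1) by (simp add: zero_fword_def[symmetric])
    next
      case (Cons g ws)
      then show ?case by (simp add: frag_of_Cons assms(2,3))
    qed
    then show ?thesis by (simp add: FW)
  qed
qed (rule assms(4))

lemma fr_ring_antihom_eqI:
  assumes R: "ring R" and \<phi>: "\<phi> \<in> ring_antihom Fr R" and \<psi>: "\<psi> \<in> ring_antihom Fr R"
    and letters: "\<And>g. \<phi> (X g) = \<psi> (X g)"
  shows "\<phi> c = \<psi> c"
proof (induction c rule: fr_induct_letters)
  case one
  show ?case using ring_antihom_one[OF \<phi>] ring_antihom_one[OF \<psi>] by simp
next
  case (mult a b)
  then show ?case using ring_antihom_mult[OF \<phi>] ring_antihom_mult[OF \<psi>] by simp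
next
  case (diff a b)
  interpret R: ring R by fact
  have minus: "\<chi> (a - b) = \<chi> a \<ominus>\<^bsub>R\<^esub> \<chi> b" if "\<chi> \<in> ring_antihom Fr R" for \<chi>
    using ring_antihom_add[OF that, of a "- b"] ring_antihom_a_inv[OF ring_Fr R that, of b]
    by (simp add: R.minus_eq)
  show ?case using minus[OF \<phi>] minus[OF \<psi>] diff by simp
qed (rule letters)

section \<open>The star on the free ring\<close>

fun gen_star :: "gen \<Rightarrow> gen" where
  "gen_star U0 = U0" | "gen_star U1 = U1" | "gen_star U2 = U2"
| "gen_star A01 = A10" | "gen_star A10 = A01" | "gen_star A02 = A20" | "gen_star A20 = A02"
| "gen_star A12 = A21" | "gen_star A21 = A12"

lemma gen_star_involutive [simp]: "gen_star (gen_star g) = g"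
  by (cases g) auto

lemma gen_star_ug [simp]: "gen_star (ug j) = ug j"
  by (cases j rule: ug.cases) auto

lemma gen_star_ag [simp]: "gen_star (ag j k) = ag k j"
  by (induction j k rule: ag.induct) auto

lemma odd_gen_gen_star [simp]: "odd_gen (gen_star g) = odd_gen g"
  by (cases g) (auto simp: odd_gen_def)

fun word_star :: "gen fword \<Rightarrow> gen fword" where
  "word_star (FW ws) = FW (rev (map gen_star ws))"

lemma word_star_0 [simp]: "word_star 0 = 0"
  by (simp add: zero_fword_def)

lemma word_star_add: "word_star (v + w) = word_star w + word_star v"
  by (cases v; cases w) simp

lemma word_star_involutive [simp]: "word_star (word_star w) = w"
  by (cases w) (simp add: rev_map comp_def)

lemma wpar_word_star [simp]: "wpar (word_star w) = wpar w"
proof (cases w)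
  case (FW ws)
  have "filter odd_gen (map gen_star ws) = map gen_star (filter odd_gen ws)"
    by (induction ws) auto
  then show ?thesis using FW by (simp add: rev_filter[symmetric])
qed

definition fr_star :: "fr \<Rightarrow> fr" where
  "fr_star = frag_map word_star"

lemma fr_star_X [simp]: "fr_star (X g) = X (gen_star g)"
  by (simp add: fr_star_def X_def)

lemma fr_star_involutive [simp]: "fr_star (fr_star a) = a"
  by (simp add: fr_star_def frag_map_compose comp_def id_def[symmetric])

lemma fr_star_0 [simp]: "fr_star 0 = 0"
  by (simp add: fr_star_def)

lemma fr_star_add: "fr_star (a + b) = fr_star a + fr_star b"
  by (simp add: fr_star_def frag_map_add)

lemma fr_star_diff: "fr_star (a - b) = fr_star a - fr_star b"
  by (simp add: fr_star_def frag_map_diff)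

lemma fr_star_mult: "fr_star (a * b) = fr_star b * fr_star a"
  by (simp add: fr_star_def frag_map_mult_rev word_star_add)

lemma fr_star_one [simp]: "fr_star 1 = 1"
  by (simp add: fr_star_def frag_map_one)

lemma fr_star_of_nat [simp]: "fr_star (of_nat n) = of_nat n"
  by (induction n) (simp_all add: fr_star_add)

lemma fr_star_power: "fr_star (a ^ n) = fr_star a ^ n"
  by (induction n) (simp_all add: fr_star_mult power_commutes)

lemma fr_star_sum: "fr_star (\<Sum>i\<in>A. f i) = (\<Sum>i\<in>A. fr_star (f i))"
  by (simp add: fr_star_def frag_map_sum)

lemma fr_star_Npoly: "fr_star (Npoly p e a) = Npoly p (fr_star e) (fr_star a)"
  by (simp add: Npoly_def fr_star_add fr_star_sum fr_star_power)

lemma fr_star_ring_antihom: "fr_star \<in> ring_antihom Fr Fr"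
  by (simp add: ring_antihom_def fr_star_add fr_star_mult)

section \<open>Descent to the presented ring\<close>

lemma fr_star_Rel: "fr_star ` Rel p \<subseteq> Rel p"
proof
  fix r assume "r \<in> fr_star ` Rel p"
  then obtain r0 where r: "r = fr_star r0" and r0: "r0 \<in> Rel p" by blast
  then consider
    (idempotent) j k where "r0 = u j * u k - (if j = k then u j else 0)" "j < 3" "k < 3"
  | (unit) "r0 = u 0 + u 1 + u 2 - 1"
  | (corner) j k where "r0 = u j * \<alpha> j k * u k - \<alpha> j k" "j < 3" "k < 3" "j \<noteq> k"
  | (path) j k m where "r0 = \<alpha> j k * \<alpha> k m" "{j, k, m} = {0, 1, 2::nat}"
  | (N0) "r0 = \<alpha> 0 1 * \<alpha> 1 0 - Npoly p (u 0) (u 0 - \<alpha> 0 2 * \<alpha> 2 0)"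
  | (N1) "r0 = \<alpha> 1 0 * \<alpha> 0 1 - Npoly p (u 1) (u 1 - \<alpha> 1 2 * \<alpha> 2 1)"
  | (N2) "r0 = of_nat p * u 2 - (Npoly p (u 2) (u 2 - \<alpha> 2 0 * \<alpha> 0 2)
                                  + Npoly p (u 2) (u 2 - \<alpha> 2 1 * \<alpha> 1 2))"
    unfolding Rel_def by blast
  then show "r \<in> Rel p"
  proof cases
    case idempotent
    then have "r = u k * u j - (if k = j then u k else 0)"
      by (auto simp: r fr_star_diff fr_star_mult)
    with idempotent show ?thesis unfolding Rel_def by blast
  next
    case corner
    then have "r = u k * \<alpha> k j * u j - \<alpha> k j"
      by (simp add: r fr_star_diff fr_star_mult mult.assoc)
    with corner show ?thesis unfolding Rel_def by blast
  next
    case path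
    then have "r = \<alpha> m k * \<alpha> k j" "{m, k, j} = {0, 1, 2::nat}"
      by (auto simp: r fr_star_mult insert_commute)
    then show ?thesis unfolding Rel_def by blast
  qed (use r0 in \<open>simp_all add: r fr_star_diff fr_star_add fr_star_mult fr_star_Npoly
                                 mult_of_nat_commute\<close>)
qed

lemma ideal_KI: "ideal (KI p) Fr"
  unfolding KI_def by (rule ring.genideal_ideal[OF ring_Fr]) simp

lemma fr_star_KI: "fr_star ` KI p = KI p"
proof -
  have closed: "fr_star ` KI p \<subseteq> KI p"
    unfolding KI_def
    using ring.ring_antihom_genideal_closed[OF ring_Fr fr_star_ring_antihom _ order_trans[OF fr_star_Rel]]
      ring.genideal_self[OF ring_Fr]
    by simp
  moreover have "KI p \<subseteq> fr_star ` KI p"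
  proof
    fix x assume "x \<in> KI p"
    then have "fr_star x \<in> KI p" using closed by blast
    then show "x \<in> fr_star ` KI p" by (rule image_eqI[rotated]) simp
  qed
  ultimately show ?thesis ..
qed

lemma cls_eq_image: "cls p a = (\<lambda>h. h + a) ` KI p"
  unfolding cls_def a_r_coset_def' by auto

lemma fr_star_cls: "fr_star ` cls p a = cls p (fr_star a)"
proof -
  have "fr_star ` cls p a = (\<lambda>h. h + fr_star a) ` fr_star ` KI p"
    unfolding cls_eq_image image_image by (simp add: fr_star_add)
  then show ?thesis
    unfolding fr_star_KI cls_eq_image .
qed

lemma cls_ring_hom: "cls p \<in> ring_hom Fr (K p)"
proof -
  have "cls p = (+>\<^bsub>Fr\<^esub>) (KI p)"
    by (rule ext) (simp add: cls_def)
  then show ?thesis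
    unfolding K_def using ideal.rcos_ring_hom[OF ideal_KI] by simp
qed

lemma ring_K: "ring (K p)"
  unfolding K_def by (rule ideal.quotient_is_ring[OF ideal_KI])

lemma carrier_K: "carrier (K p) = range (cls p)"
  unfolding K_def FactRing_def A_RCOSETS_def' cls_def by auto

lemma cls_add: "cls p a \<oplus>\<^bsub>K p\<^esub> cls p b = cls p (a + b)"
  using ring_hom_add[OF cls_ring_hom] by simp

lemma cls_mult: "cls p a \<otimes>\<^bsub>K p\<^esub> cls p b = cls p (a * b)"
  using ring_hom_mult[OF cls_ring_hom] by simp

lemma cls_one: "\<one>\<^bsub>K p\<^esub> = cls p 1"
  using ring_hom_one[OF cls_ring_hom] by simp

lemma star_on_gens_iff_letters:
  "star_on_gens p f \<longleftrightarrow> (\<forall>g. f (cls p (X g)) = cls p (X (gen_star g)))"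
proof
  assume "star_on_gens p f"
  then have u: "\<And>j. j < 3 \<Longrightarrow> f (cls p (u j)) = cls p (u j)"
    and \<alpha>: "\<And>j k. j < 3 \<Longrightarrow> k < 3 \<Longrightarrow> j \<noteq> k \<Longrightarrow> f (cls p (\<alpha> j k)) = cls p (\<alpha> k j)"
    unfolding star_on_gens_def by blast+
  show "\<forall>g. f (cls p (X g)) = cls p (X (gen_star g))"
  proof
    fix g show "f (cls p (X g)) = cls p (X (gen_star g))"
      using u[of 0] u[of 1] u[of 2] \<alpha>[of 0 1] \<alpha>[of 0 2] \<alpha>[of 1 0] \<alpha>[of 1 2] \<alpha>[of 2 0] \<alpha>[of 2 1]
      by (cases g) (simp_all add: numeral_eq_Suc)
  qed
qed (simp add: star_on_gens_def)

lemma ring_antiaut_image_fr_star: "ring_antiaut (K p) ((`) fr_star)"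
  unfolding ring_antiaut_def carrier_K
proof (intro conjI ballI)
  show "bij_betw ((`) fr_star) (range (cls p)) (range (cls p))"
    by (rule bij_betw_byWitness[where f' = "(`) fr_star"]) (auto simp: image_comp fr_star_cls)
  fix x y assume "x \<in> range (cls p)" "y \<in> range (cls p)"
  then obtain a b where "x = cls p a" "y = cls p b" by blast
  then show "fr_star ` (x \<oplus>\<^bsub>K p\<^esub> y) = fr_star ` x \<oplus>\<^bsub>K p\<^esub> fr_star ` y"
    and "fr_star ` (x \<otimes>\<^bsub>K p\<^esub> y) = fr_star ` y \<otimes>\<^bsub>K p\<^esub> fr_star ` x"
    by (simp_all add: cls_add cls_mult fr_star_cls fr_star_add fr_star_mult)
next
  show "fr_star ` \<one>\<^bsub>K p\<^esub> = \<one>\<^bsub>K p\<^esub>"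
    by (simp add: cls_one fr_star_cls)
qed

lemma star_on_gens_image_fr_star: "star_on_gens p ((`) fr_star)"
  by (simp add: star_on_gens_iff_letters fr_star_cls)

lemma ring_antiaut_unique:
  assumes g: "ring_antiaut (K p) g" "star_on_gens p g" and x: "x \<in> carrier (K p)"
  shows "g x = fr_star ` x"
proof -
  obtain a where a: "x = cls p a"
    using x carrier_K by blast
  have "(g \<circ> cls p) a = (cls p \<circ> fr_star) a"
  proof (rule fr_ring_antihom_eqI[OF ring_K])
    show "g \<circ> cls p \<in> ring_antihom Fr (K p)"
      using ring_antihom_comp_ring_hom[OF ring_antiaut_imp_ring_antihom[OF g(1)] cls_ring_hom] .
    show "cls p \<circ> fr_star \<in> ring_antihom Fr (K p)"
      using ring_hom_comp_ring_antihom[OF cls_ring_hom fr_star_ring_antihom] .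
    show "(g \<circ> cls p) (X h) = (cls p \<circ> fr_star) (X h)" for h
      using g(2) by (simp add: star_on_gens_iff_letters)
  qed
  then show ?thesis
    by (simp add: a fr_star_cls)
qed

lemma image_fr_star_Kdeg:
  assumes "x \<in> Kdeg p d" shows "fr_star ` x \<in> Kdeg p d"
proof -
  obtain c where c: "x = cls p c" "\<forall>w \<in> Poly_Mapping.keys c. wpar w = d"
    using assms unfolding Kdeg_def by blast
  have "\<forall>w \<in> Poly_Mapping.keys (fr_star c). wpar w = d"
    using keys_frag_map[of word_star c] c(2) by (auto simp: fr_star_def)
  then show ?thesis
    unfolding Kdeg_def c(1) fr_star_cls by blast
qed

theorem proposition5p11:
  fixes p :: nat
  assumes "prime p"
  shows "\<exists>f. ring_antiaut (K p) f \<and> star_on_gens p f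
           \<and> (\<forall>g. ring_antiaut (K p) g \<and> star_on_gens p g \<longrightarrow> (\<forall>x \<in> carrier (K p). g x = f x))
           \<and> (\<forall>d \<in> {0, 1}. \<forall>x \<in> Kdeg p d. f x \<in> Kdeg p d)
           \<and> (\<forall>x \<in> carrier (K p). f (f x) = x)"
proof (intro exI conjI ballI allI impI)
  show "ring_antiaut (K p) ((`) fr_star)"
    by (rule ring_antiaut_image_fr_star)
  show "star_on_gens p ((`) fr_star)"
    by (rule star_on_gens_image_fr_star)
  show "g x = fr_star ` x" if "ring_antiaut (K p) g \<and> star_on_gens p g" "x \<in> carrier (K p)" for g x
    using ring_antiaut_unique that by blast
  show "fr_star ` x \<in> Kdeg p d" if "x \<in> Kdeg p d" for d x
    using image_fr_star_Kdeg that .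
  show "fr_star ` fr_star ` x = x" for x
    by (simp add: image_image)
qed

end
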